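(* There exists no function $f:\mathbb{N}\to\mathbb{N}$ such that $\chi_{\mu_2}(G\,\square\, G)\le f(\chi_{\mu_2}(G))$ holds for all graphs $G$.
   Context: The Cartesian product $G\,\square\, H$ has vertex set $V(G)\times V(H)$, with $(g,h)$ adjacent to $(g',h')$ iff either $g=g'$ and $hh'\in E(H)$, or $gg'\in E(G)$ and $h=h'$. A set $M\subseteq V(X)$ is a $2$-distance mutual-visibility set if for every two vertices $u,v\in M$ there exists a shortest $u,v$-path of length at most $2$ none of whose internal vertices lies in $M$. $\chi_{\mu_2}(X)$ is the minimum cardinality of a partition of $V(X)$ into $2$-distance mutual-visibility sets. *)

theory Defs
  imports Main "HOL-Library.Disjoint_Sets"
begin

definition simple_graph :: "'a set \<Rightarrow> ('a \<Rightarrow> 'a \<Rightarrow> bool) \<Rightarrow> bool" where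
  "simple_graph V E \<longleftrightarrow> finite V \<and> (\<forall>x y. E x y \<longrightarrow> x \<in> V \<and> y \<in> V)
     \<and> (\<forall>x y. E x y \<longrightarrow> E y x) \<and> (\<forall>x. \<not> E x x)"

definition cart_edges :: "('a \<Rightarrow> 'a \<Rightarrow> bool) \<Rightarrow> ('b \<Rightarrow> 'b \<Rightarrow> bool)
    \<Rightarrow> ('a \<times> 'b) \<Rightarrow> ('a \<times> 'b) \<Rightarrow> bool" where
  "cart_edges E F = (\<lambda>(g, h) (g', h'). (g = g' \<and> F h h') \<or> (E g g' \<and> h = h'))"

text \<open>2-distance mutual-visibility set: any two vertices u, v of M are joined by a shortest
  path of length at most 2 with no internal vertex in M. For u = v or u adjacent to v this
  is the trivial path; otherwise d(u,v) = 2 and the path is u - w - v with w not in M.\<close>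
definition mv2_set :: "'a set \<Rightarrow> ('a \<Rightarrow> 'a \<Rightarrow> bool) \<Rightarrow> 'a set \<Rightarrow> bool" where
  "mv2_set V E M \<longleftrightarrow> M \<subseteq> V \<and>
     (\<forall>u\<in>M. \<forall>v\<in>M. u = v \<or> E u v \<or> (\<exists>w\<in>V. E u w \<and> E w v \<and> w \<notin> M))"

definition chi_mu2 :: "'a set \<Rightarrow> ('a \<Rightarrow> 'a \<Rightarrow> bool) \<Rightarrow> nat" where
  "chi_mu2 V E = (LEAST k. \<exists>P. partition_on V P \<and> card P = k \<and> (\<forall>M\<in>P. mv2_set V E M))"

end

theory Submission
  imports Defs
begin

text \<open>The star \<open>K\<^sub>1\<^sub>,\<^sub>n\<close> splits into its centre and its leaves, both 2-distance
  mutual-visibility sets, so \<open>\<chi>\<^sub>\<mu>\<^sub>2(K\<^sub>1\<^sub>,\<^sub>n) \<le> 2\<close>. In \<open>K\<^sub>1\<^sub>,\<^sub>n \<box> K\<^sub>1\<^sub>,\<^sub>n\<close>, however,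
  two diagonal vertices \<open>(i,i)\<close> and \<open>(j,j)\<close> with distinct leaves \<open>i, j\<close> are at distance 4,
  so the \<open>n\<close> such vertices lie in pairwise different classes and \<open>\<chi>\<^sub>\<mu>\<^sub>2\<close> of the product
  is at least \<open>n\<close>.\<close>

definition far_apart :: "('a \<Rightarrow> 'a \<Rightarrow> bool) \<Rightarrow> 'a \<Rightarrow> 'a \<Rightarrow> bool" where
  "far_apart E u v \<longleftrightarrow> \<not> E u v \<and> \<not> (\<exists>w. E u w \<and> E w v)"

lemma mv2_set_not_far_apart:
  assumes "mv2_set V E M" "u \<in> M" "v \<in> M" "u \<noteq> v"
  shows "\<not> far_apart E u v"
  using assms unfolding mv2_set_def far_apart_def by blast

lemma chi_mu2_le_card_partition:
  assumes "partition_on V P" "\<forall>M\<in>P. mv2_set V E M"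
  shows "chi_mu2 V E \<le> card P"
  unfolding chi_mu2_def using assms by (intro Least_le) blast

lemma chi_mu2_attained:
  "\<exists>P. partition_on V P \<and> card P = chi_mu2 V E \<and> (\<forall>M\<in>P. mv2_set V E M)"
proof -
  have "\<forall>M\<in>(\<lambda>x. {x}) ` V. mv2_set V E M"
    unfolding mv2_set_def by auto
  then have "\<exists>k P. partition_on V P \<and> card P = k \<and> (\<forall>M\<in>P. mv2_set V E M)"
    using partition_on_singletons by blast
  then show ?thesis
    unfolding chi_mu2_def by (rule LeastI_ex)
qed

lemma card_le_card_partition:
  assumes P: "partition_on V P" and "finite V" "S \<subseteq> V"
    and separated: "\<And>M s t. M \<in> P \<Longrightarrow> s \<in> S \<Longrightarrow> t \<in> S \<Longrightarrow> s \<in> M \<Longrightarrow> t \<in> M \<Longrightarrow> s = t"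
  shows "card S \<le> card P"
proof -
  define part where "part s = (SOME M. M \<in> P \<and> s \<in> M)" for s
  have part: "part s \<in> P \<and> s \<in> part s" if "s \<in> S" for s
  proof -
    have "\<exists>M. M \<in> P \<and> s \<in> M"
      using partition_onD1[OF P] \<open>S \<subseteq> V\<close> that by blast
    then show ?thesis
      unfolding part_def by (rule someI_ex)
  qed
  have "inj_on part S"
    by (rule inj_onI) (metis part separated)
  moreover have "part ` S \<subseteq> P"
    using part by blast
  moreover have "finite P"
    using finite_elements[OF \<open>finite V\<close> P] .
  ultimately show ?thesis
    by (rule card_inj_on_le)
qed

lemma card_le_chi_mu2:
  assumes "finite V" "S \<subseteq> V" "pairwise (far_apart E) S"
  shows "card S \<le> chi_mu2 V E"
proof -
  obtain P where P: "partition_on V P" "card P = chi_mu2 V E" "\<forall>M\<in>P. mv2_set V E M"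
    using chi_mu2_attained by blast
  have "card S \<le> card P"
  proof (rule card_le_card_partition[OF P(1) assms(1,2)])
    fix M s t
    assume "M \<in> P" "s \<in> S" "t \<in> S" "s \<in> M" "t \<in> M"
    then show "s = t"
      using P(3) assms(3) mv2_set_not_far_apart unfolding pairwise_def by metis
  qed
  then show ?thesis
    using P(2) by simp
qed

definition star_edges :: "nat \<Rightarrow> nat \<Rightarrow> nat \<Rightarrow> bool" where
  "star_edges n x y \<longleftrightarrow> (x = 0 \<and> y \<in> {1..n}) \<or> (y = 0 \<and> x \<in> {1..n})"

lemma simple_graph_star: "simple_graph {0..n} (star_edges n)"
  unfolding simple_graph_def star_edges_def by auto

lemma chi_mu2_star_le_2:
  assumes "n \<ge> 1"
  shows "chi_mu2 {0..n} (star_edges n) \<le> 2"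
proof -
  let ?P = "{{0}, {1..n}}"
  have "partition_on {0..n} ?P"
    unfolding partition_on_def disjoint_def using assms by auto
  moreover have "\<forall>M\<in>?P. mv2_set {0..n} (star_edges n) M"
    unfolding mv2_set_def star_edges_def by auto
  ultimately have "chi_mu2 {0..n} (star_edges n) \<le> card ?P"
    by (rule chi_mu2_le_card_partition)
  also have "card ?P \<le> 2"
    by (simp add: card_insert_le_m1)
  finally show ?thesis .
qed

lemma far_apart_star_product_diagonal:
  assumes "i \<in> {1..n}" "j \<in> {1..n}" "i \<noteq> j"
  shows "far_apart (cart_edges (star_edges n) (star_edges n)) (i, i) (j, j)"
  using assms unfolding far_apart_def cart_edges_def star_edges_def by auto

lemma chi_mu2_star_product_ge:
  "n \<le> chi_mu2 ({0..n} \<times> {0..n}) (cart_edges (star_edges n) (star_edges n))"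
proof -
  let ?D = "(\<lambda>i. (i, i)) ` {1..n}"
  have "pairwise (far_apart (cart_edges (star_edges n) (star_edges n))) ?D"
    using far_apart_star_product_diagonal by (auto simp: pairwise_def)
  then have "card ?D \<le> chi_mu2 ({0..n} \<times> {0..n}) (cart_edges (star_edges n) (star_edges n))"
    by (intro card_le_chi_mu2) auto
  moreover have "card ?D = n"
    by (simp add: card_image inj_on_def)
  ultimately show ?thesis
    by simp
qed

theorem mainTheorem15:
  shows "\<not> (\<exists>f :: nat \<Rightarrow> nat. \<forall>(V :: nat set) E. simple_graph V E \<longrightarrow>
            chi_mu2 (V \<times> V) (cart_edges E E) \<le> f (chi_mu2 V E))"
proof
  assume "\<exists>f :: nat \<Rightarrow> nat. \<forall>(V :: nat set) E. simple_graph V E \<longrightarrow>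
            chi_mu2 (V \<times> V) (cart_edges E E) \<le> f (chi_mu2 V E)"
  then obtain f :: "nat \<Rightarrow> nat" where f: "\<And>(V :: nat set) E. simple_graph V E \<Longrightarrow>
            chi_mu2 (V \<times> V) (cart_edges E E) \<le> f (chi_mu2 V E)"
    by blast
  define n where "n = Suc (f 0 + f 1 + f 2)"
  let ?c = "chi_mu2 {0..n} (star_edges n)"
  have "?c \<le> 2"
    using chi_mu2_star_le_2 n_def by simp
  then have "f ?c < n"
    unfolding n_def by (auto simp: le_Suc_eq numeral_2_eq_2)
  moreover have "n \<le> f ?c"
    using chi_mu2_star_product_ge[of n] f[OF simple_graph_star[of n]] by linarith
  ultimately show False
    by simp
qed

end
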